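(* Let $r,k\ge1$ be integers and let $C_1,\dots,C_r\subset\mathbb{R}^d$ be pairwise disjoint sets, each of size $k$; set $P=\bigcup_{j=1}^rC_j$. Then there exist a point $q\in\mathbb{R}^d$ and a partition $P_1,\dots,P_k$ of $P$ such that $|P_i\cap C_j|=1$ for every $i\in[k]$ and $j\in[r]$, and \[ d(q,\operatorname{conv}P_i)\le(1+\sqrt2)\frac{\operatorname{diam}P}{\sqrt r}\qquad\text{for every } i\in[k]. \]
   Context: $d(q,S)$ is the Euclidean distance from a point to a set; $\operatorname{diam}$ is the Euclidean diameter. *)

theory Defs
  imports "HOL-Analysis.Analysis"
begin

end

theory Submission
  imports Defs "HOL-Combinatorics.Transposition"
begin

text \<open>Label the points of each class \<open>C j\<close> bijectively by the part indices and take a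
  labelling minimising the energy, the sum of the squared norms of the part sums \<open>T i\<close>.
  Exchanging the labels \<open>a\<close>, \<open>b\<close> of two points of one class cannot decrease the energy, which
  gives \<open>(a - b) \<bullet> (T i - T i') \<le> \<bar>a - b\<bar>\<^sup>2\<close>; summing over the classes yields
  \<open>\<bar>T i - T i'\<bar> \<le> sqrt r * diam P\<close>.\<close>

definition bij_labellings :: "'j set \<Rightarrow> 'i set \<Rightarrow> ('j \<Rightarrow> 'a set) \<Rightarrow> ('j \<Rightarrow> 'i \<Rightarrow> 'a) set" where
  "bij_labellings J I C =
     {g \<in> (\<Pi>\<^sub>E j\<in>J. \<Pi>\<^sub>E i\<in>I. C j). \<forall>j\<in>J. bij_betw (g j) I (C j)}"

lemma bij_labellingsD:
  assumes "g \<in> bij_labellings J I C" and "j \<in> J"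
  shows "bij_betw (g j) I (C j)"
  using assms by (simp add: bij_labellings_def)

lemma bij_labelling_in_class:
  assumes "g \<in> bij_labellings J I C" and "j \<in> J" and "i \<in> I"
  shows "g j i \<in> C j"
  using bij_labellingsD[OF assms(1,2)] assms(3) bij_betwE by blast

lemma finite_bij_labellings:
  assumes "finite J" and "finite I" and "\<And>j. j \<in> J \<Longrightarrow> finite (C j)"
  shows "finite (bij_labellings J I C)"
proof (rule finite_subset)
  show "bij_labellings J I C \<subseteq> (\<Pi>\<^sub>E j\<in>J. \<Pi>\<^sub>E i\<in>I. C j)"
    by (auto simp: bij_labellings_def)
  show "finite (\<Pi>\<^sub>E j\<in>J. \<Pi>\<^sub>E i\<in>I. C j)"
    using assms by (intro finite_PiE) auto
qed

lemma bij_labellings_nonempty: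
  assumes "finite I" and "\<And>j. j \<in> J \<Longrightarrow> finite (C j) \<and> card (C j) = card I"
  shows "bij_labellings J I C \<noteq> {}"
proof -
  have "\<forall>j\<in>J. \<exists>h. bij_betw h I (C j)"
    using assms finite_same_card_bij by metis
  then obtain h where h: "\<And>j. j \<in> J \<Longrightarrow> bij_betw (h j) I (C j)"
    by metis
  have "(\<lambda>j\<in>J. \<lambda>i\<in>I. h j i) \<in> bij_labellings J I C"
    using h by (auto simp: bij_labellings_def PiE_iff intro: bij_betw_apply cong: bij_betw_cong)
  then show ?thesis by blast
qed

definition labelled_part :: "'j set \<Rightarrow> ('j \<Rightarrow> 'i \<Rightarrow> 'a) \<Rightarrow> 'i \<Rightarrow> 'a set" where
  "labelled_part J g i = (\<lambda>j. g j i) ` J"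

lemma UN_labelled_parts:
  assumes "g \<in> bij_labellings J I C"
  shows "(\<Union>i\<in>I. labelled_part J g i) = (\<Union>j\<in>J. C j)"
proof
  show "(\<Union>i\<in>I. labelled_part J g i) \<subseteq> (\<Union>j\<in>J. C j)"
    using bij_labelling_in_class[OF assms] by (auto simp: labelled_part_def)
  show "(\<Union>j\<in>J. C j) \<subseteq> (\<Union>i\<in>I. labelled_part J g i)"
  proof
    fix x assume "x \<in> (\<Union>j\<in>J. C j)"
    then obtain j where "j \<in> J" and "x \<in> C j" by blast
    then obtain i where "i \<in> I" and "x = g j i"
      using bij_labellingsD[OF assms] by (auto simp: bij_betw_def)
    then show "x \<in> (\<Union>i\<in>I. labelled_part J g i)"
      using \<open>j \<in> J\<close> by (auto simp: labelled_part_def)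
  qed
qed

lemma labelled_part_Int_class:
  assumes "g \<in> bij_labellings J I C" and "disjoint_family_on C J" and "i \<in> I" and "j \<in> J"
  shows "labelled_part J g i \<inter> C j = {g j i}"
proof -
  have "g j' i \<notin> C j" if "j' \<in> J" and "j' \<noteq> j" for j'
    using bij_labelling_in_class[OF assms(1) that(1) assms(3)] assms(2,4) that
    by (auto simp: disjoint_family_on_def)
  then show ?thesis
    using bij_labelling_in_class[OF assms(1,4,3)] assms(4)
    by (auto simp: labelled_part_def)
qed

lemma labelled_parts_disjoint:
  assumes "g \<in> bij_labellings J I C" and "disjoint_family_on C J"
    and "i \<in> I" and "i' \<in> I" and "i \<noteq> i'"
  shows "labelled_part J g i \<inter> labelled_part J g i' = {}"
proof -
  have "g j i \<noteq> g j' i'" if "j \<in> J" and "j' \<in> J" for j j'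
  proof (cases "j = j'")
    case True
    then show ?thesis
      using bij_labellingsD[OF assms(1) that(1)] assms(3-5) by (auto simp: bij_betw_def inj_on_def)
  next
    case False
    then show ?thesis
      using bij_labelling_in_class[OF assms(1)] assms(2-4) that
      by (fastforce simp: disjoint_family_on_def)
  qed
  then show ?thesis
    by (auto simp: labelled_part_def)
qed

definition part_sum :: "'j set \<Rightarrow> ('j \<Rightarrow> 'i \<Rightarrow> 'a::real_vector) \<Rightarrow> 'i \<Rightarrow> 'a" where
  "part_sum J g i = (\<Sum>j\<in>J. g j i)"

definition part_centroid :: "'j set \<Rightarrow> ('j \<Rightarrow> 'i \<Rightarrow> 'a::real_vector) \<Rightarrow> 'i \<Rightarrow> 'a" where
  "part_centroid J g i = (1 / real (card J)) *\<^sub>R part_sum J g i"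

lemma part_centroid_in_convex_hull:
  assumes "finite J" and "J \<noteq> {}"
  shows "part_centroid J g i \<in> convex hull (labelled_part J g i)"
proof -
  have "(\<Sum>j\<in>J. (1 / real (card J)) *\<^sub>R g j i) \<in> convex hull (labelled_part J g i)"
    using assms by (intro convex_sum) (auto simp: labelled_part_def intro: hull_inc)
  then show ?thesis
    by (simp add: part_centroid_def part_sum_def scaleR_sum_right)
qed

definition swap_labels :: "('j \<Rightarrow> 'i \<Rightarrow> 'a) \<Rightarrow> 'j \<Rightarrow> 'i \<Rightarrow> 'i \<Rightarrow> 'j \<Rightarrow> 'i \<Rightarrow> 'a" where
  "swap_labels g j0 i i' = g(j0 := g j0 \<circ> Transposition.transpose i i')"

lemma bij_labellings_swap:
  assumes "g \<in> bij_labellings J I C" and "j0 \<in> J" and "i \<in> I" and "i' \<in> I"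
  shows "swap_labels g j0 i i' \<in> bij_labellings J I C"
proof -
  have "bij_betw (Transposition.transpose i i') I I"
    using assms(3,4) by simp
  then have "bij_betw (g j0 \<circ> Transposition.transpose i i') I (C j0)"
    using bij_labellingsD[OF assms(1,2)] by (rule bij_betw_trans)
  moreover have "g j0 \<circ> Transposition.transpose i i' \<in> (\<Pi>\<^sub>E i\<in>I. C j0)"
    using assms bij_labelling_in_class[OF assms(1,2)]
    by (auto simp: bij_labellings_def PiE_iff extensional_def Transposition.transpose_def)
  ultimately show ?thesis
    using assms(1,2) by (auto simp: swap_labels_def bij_labellings_def PiE_iff extensional_def)
qed

lemma part_sum_swap:
  assumes "finite J" and "j0 \<in> J"
  shows "part_sum J (swap_labels g j0 i i') x
           = part_sum J g x + (g j0 (Transposition.transpose i i' x) - g j0 x)"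
proof -
  have "part_sum J (swap_labels g j0 i i') x
          = (\<Sum>j\<in>J. g j x +
               (if j = j0 then g j0 (Transposition.transpose i i' x) - g j0 x else 0))"
    unfolding part_sum_def swap_labels_def by (rule sum.cong) auto
  then show ?thesis
    using assms by (simp add: part_sum_def sum.distrib)
qed

definition part_energy :: "'j set \<Rightarrow> 'i set \<Rightarrow> ('j \<Rightarrow> 'i \<Rightarrow> 'a::real_normed_vector) \<Rightarrow> real" where
  "part_energy J I g = (\<Sum>i\<in>I. (norm (part_sum J g i))\<^sup>2)"

lemma norm_add_diff_power2:
  fixes u v d :: "'a::real_inner"
  shows "(norm (u + d))\<^sup>2 + (norm (v - d))\<^sup>2
           = (norm u)\<^sup>2 + (norm v)\<^sup>2 + 2 * (d \<bullet> (u - v)) + 2 * (norm d)\<^sup>2"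
  by (simp add: power2_norm_eq_inner algebra_simps inner_commute)

lemma part_energy_swap:
  fixes g :: "'j \<Rightarrow> 'i \<Rightarrow> 'a::real_inner"
  assumes "finite J" and "finite I" and "j0 \<in> J" and "i \<in> I" and "i' \<in> I" and "i \<noteq> i'"
  defines "d \<equiv> g j0 i' - g j0 i"
  shows "part_energy J I (swap_labels g j0 i i')
           = part_energy J I g + 2 * (d \<bullet> (part_sum J g i - part_sum J g i')) + 2 * (norm d)\<^sup>2"
proof -
  let ?g' = "swap_labels g j0 i i'"
  have sum_i: "part_sum J ?g' i = part_sum J g i + d"
    and sum_i': "part_sum J ?g' i' = part_sum J g i' - d"
    using assms(1,3) by (simp_all add: part_sum_swap d_def)
  define \<delta> where "\<delta> x = (norm (part_sum J ?g' x))\<^sup>2 - (norm (part_sum J g x))\<^sup>2" for x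
  have "part_energy J I ?g' - part_energy J I g = (\<Sum>x\<in>I. \<delta> x)"
    by (simp add: part_energy_def \<delta>_def sum_subtractf)
  also have "\<dots> = (\<Sum>x\<in>{i, i'}. \<delta> x)"
    using assms(1-5) by (intro sum.mono_neutral_right) (auto simp: \<delta>_def part_sum_swap)
  also have "\<dots> = \<delta> i + \<delta> i'"
    using assms(6) by simp
  also have "\<dots> = 2 * (d \<bullet> (part_sum J g i - part_sum J g i')) + 2 * (norm d)\<^sup>2"
    using norm_add_diff_power2[of "part_sum J g i" d "part_sum J g i'"]
    by (simp add: \<delta>_def sum_i sum_i')
  finally show ?thesis by simp
qed

lemma ex_min_energy_bij_labelling:
  fixes C :: "'j \<Rightarrow> 'a::real_normed_vector set"
  assumes "finite J" and "finite I" and "\<And>j. j \<in> J \<Longrightarrow> finite (C j) \<and> card (C j) = card I"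
  shows "\<exists>g. is_arg_min (part_energy J I) (\<lambda>g. g \<in> bij_labellings J I C) g"
  using assms by (intro ex_is_arg_min_if_finite finite_bij_labellings bij_labellings_nonempty) auto

context
  fixes J :: "'j set" and I :: "'i set"
    and C :: "'j \<Rightarrow> 'a::real_inner set" and g :: "'j \<Rightarrow> 'i \<Rightarrow> 'a"
  assumes finite_J: "finite J" and finite_I: "finite I"
    and g_min: "is_arg_min (part_energy J I) (\<lambda>g. g \<in> bij_labellings J I C) g"
begin

lemma min_energy_swap_inner_le:
  assumes "j0 \<in> J" and "i \<in> I" and "i' \<in> I"
  shows "(g j0 i - g j0 i') \<bullet> (part_sum J g i - part_sum J g i') \<le> (norm (g j0 i - g j0 i'))\<^sup>2"
proof (cases "i = i'")
  case False
  have "swap_labels g j0 i i' \<in> bij_labellings J I C"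
    using g_min assms by (intro bij_labellings_swap) (auto simp: is_arg_min_def)
  then have "part_energy J I g \<le> part_energy J I (swap_labels g j0 i i')"
    using g_min by (simp add: is_arg_min_linorder)
  then show ?thesis
    using part_energy_swap[OF finite_J finite_I assms False, where g = g]
    by (simp add: inner_diff_left norm_minus_commute)
qed simp

lemma min_energy_part_sums_close:
  assumes "i \<in> I" and "i' \<in> I"
  shows "(norm (part_sum J g i - part_sum J g i'))\<^sup>2 \<le> (\<Sum>j\<in>J. (norm (g j i - g j i'))\<^sup>2)"
proof -
  let ?w = "part_sum J g i - part_sum J g i'"
  have "?w = (\<Sum>j\<in>J. g j i - g j i')"
    by (simp add: part_sum_def sum_subtractf)
  then have "(norm ?w)\<^sup>2 = (\<Sum>j\<in>J. (g j i - g j i') \<bullet> ?w)"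
    by (metis power2_norm_eq_inner inner_sum_left)
  also have "\<dots> \<le> (\<Sum>j\<in>J. (norm (g j i - g j i'))\<^sup>2)"
    using assms by (intro sum_mono min_energy_swap_inner_le)
  finally show ?thesis .
qed

lemma min_energy_centroids_close:
  assumes "i \<in> I" and "i' \<in> I" and D: "\<And>j. j \<in> J \<Longrightarrow> dist (g j i) (g j i') \<le> D"
  shows "dist (part_centroid J g i) (part_centroid J g i') \<le> D / sqrt (card J)"
proof (cases "J = {}")
  case False
  then have "0 \<le> D"
    using D by (meson all_not_in_conv zero_le_dist order_trans)
  have "(norm (part_sum J g i - part_sum J g i'))\<^sup>2 \<le> (\<Sum>j\<in>J. (norm (g j i - g j i'))\<^sup>2)"
    using assms(1,2) by (rule min_energy_part_sums_close)
  also have "\<dots> \<le> (\<Sum>j\<in>J. D\<^sup>2)"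
    using D by (intro sum_mono power_mono) (auto simp: dist_norm)
  also have "\<dots> = (sqrt (card J) * D)\<^sup>2"
    by (simp add: power_mult_distrib)
  finally have "norm (part_sum J g i - part_sum J g i') \<le> sqrt (card J) * D"
    by (rule power2_le_imp_le) (simp add: \<open>0 \<le> D\<close>)
  then have "norm (part_sum J g i - part_sum J g i') / card J \<le> sqrt (card J) * D / card J"
    by (simp add: divide_right_mono)
  also have "\<dots> = D / sqrt (card J)"
    using sqrt_divide_self_eq[of "card J"] by (simp add: divide_inverse mult.commute)
  finally have "norm (part_sum J g i - part_sum J g i') / card J \<le> D / sqrt (card J)" .
  then show ?thesis
    by (simp add: part_centroid_def dist_norm flip: scaleR_diff_right)
qed (simp add: part_centroid_def)

lemma min_energy_infdist_convex_hull_le: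
  assumes "J \<noteq> {}" and "i0 \<in> I" and "i \<in> I"
    and "\<And>j i i'. j \<in> J \<Longrightarrow> i \<in> I \<Longrightarrow> i' \<in> I \<Longrightarrow> dist (g j i) (g j i') \<le> D"
  shows "infdist (part_centroid J g i0) (convex hull (labelled_part J g i)) \<le> D / sqrt (card J)"
  using assms
  by (intro infdist_le2[OF part_centroid_in_convex_hull[OF finite_J]] min_energy_centroids_close)
    auto

end

theorem theorem6p1:
  fixes C :: "nat \<Rightarrow> 'a::euclidean_space set" and r k :: nat
  assumes "r \<ge> 1" and "k \<ge> 1"
    and "\<And>j. j \<in> {1..r} \<Longrightarrow> finite (C j) \<and> card (C j) = k"
    and "\<And>j j'. j \<in> {1..r} \<Longrightarrow> j' \<in> {1..r} \<Longrightarrow> j \<noteq> j' \<Longrightarrow> C j \<inter> C j' = {}"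
  shows "\<exists>(q::'a) (Q :: nat \<Rightarrow> 'a set).
           (\<Union>i\<in>{1..k}. Q i) = (\<Union>j\<in>{1..r}. C j)
         \<and> (\<forall>i\<in>{1..k}. \<forall>i'\<in>{1..k}. i \<noteq> i' \<longrightarrow> Q i \<inter> Q i' = {})
         \<and> (\<forall>i\<in>{1..k}. \<forall>j\<in>{1..r}. card (Q i \<inter> C j) = 1)
         \<and> (\<forall>i\<in>{1..k}. infdist q (convex hull (Q i))
               \<le> (1 + sqrt 2) * diameter (\<Union>j\<in>{1..r}. C j) / sqrt (real r))"
proof -
  let ?J = "{1..r}" and ?I = "{1..k}" and ?P = "\<Union>j\<in>{1..r}. C j"
  obtain g where g_min: "is_arg_min (part_energy ?J ?I) (\<lambda>g. g \<in> bij_labellings ?J ?I C) g"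
    using ex_min_energy_bij_labelling[of ?J ?I C] assms(3) by auto
  then have g: "g \<in> bij_labellings ?J ?I C"
    by (simp add: is_arg_min_def)
  have disjoint: "disjoint_family_on C ?J"
    using assms(4) by (auto simp: disjoint_family_on_def)
  have bounded: "bounded ?P"
    using assms(3) by (intro finite_imp_bounded) auto
  have "dist (g j i) (g j i') \<le> diameter ?P" if "j \<in> ?J" and "i \<in> ?I" and "i' \<in> ?I" for j i i'
    using bij_labelling_in_class[OF g] that by (intro diameter_bounded_bound[OF bounded]) blast+
  then have "infdist (part_centroid ?J g 1) (convex hull (labelled_part ?J g i))
               \<le> diameter ?P / sqrt r" if "i \<in> ?I" for i
    using min_energy_infdist_convex_hull_le[OF _ _ g_min, of 1 i] assms(1,2) that by auto
  also have "diameter ?P / sqrt r \<le> (1 + sqrt 2) * diameter ?P / sqrt r"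
    using diameter_ge_0[OF bounded] by (intro divide_right_mono) (simp_all add: algebra_simps)
  finally show ?thesis
    using UN_labelled_parts[OF g] labelled_parts_disjoint[OF g disjoint]
      labelled_part_Int_class[OF g disjoint]
    by (intro exI[of _ "part_centroid ?J g 1"] exI[of _ "labelled_part ?J g"]) auto
qed

end
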